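(* Let $q$ be a prime power, let $r$ be an odd prime not dividing $q$ such that the multiplicative order of $q$ modulo $r$ is $r-1$. Let $n>1$ with $\gcd(n,r-1)=1$, and let $f(x)$ be a monic irreducible polynomial of degree $n$ over $\mathbb{F}_q$ of order $t$. Let $R(x)\in\mathbb{F}_q[x]$ be the remainder of $x^r$ modulo $f(x)$, i.e. $x^r\equiv R(x)\pmod{f(x)}$, and let $\psi(x)=\sum_{u=0}^{n}\psi_u x^u\in\mathbb{F}_q[x]$ be the monic nonzero polynomial of least degree such that $$\sum_{u=0}^{n}\psi_u\,(R(x))^u\equiv 0\pmod{f(x)}.$$ Then $\psi(x)$ is an irreducible polynomial of degree $n$ over $\mathbb{F}_q$, and $$F(x)=\frac{\psi(x^r)}{f(x)}$$ is an irreducible polynomial of degree $(r-1)n$ over $\mathbb{F}_q$ whose order is $rt$.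
   Context: The order of a polynomial $P(x)\in\mathbb{F}_q[x]$ with $P(0)\neq0$ is the least positive integer $e$ such that $P(x)$ divides $x^e-1$; for an irreducible $P$ it equals the multiplicative order of any of its roots. *)

theory Defs
  imports "HOL-Computational_Algebra.Computational_Algebra" "HOL-Number_Theory.Number_Theory"
begin

definition poly_order :: "'a::field poly \<Rightarrow> nat" where
  "poly_order P = (LEAST e. 0 < e \<and> P dvd [:0, 1:] ^ e - 1)"

end

theory Submission
  imports Defs "HOL-Algebra.Algebraic_Closure_Type" "HOL-Library.Cardinality"
begin

(*
  All polynomials are evaluated in the algebraic closure of F_q (ac_eval).  Let alpha be a root
  of f and beta = alpha^r.  The conditions on psi say exactly that psi is a nonzero polynomial of
  least degree vanishing at beta, so psi is irreducible.  The degree of an irreducible polynomial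
  g with root x is the least period of x under Frobenius, i.e. x^(q^m) = x iff degree g dvd m;
  for x of multiplicative order d this reads  d dvd q^m - 1  iff  degree g dvd m.  Since beta has
  the same order t as alpha (r does not divide t), psi has degree n.  If zeta is a primitive r-th
  root of unity, gamma = zeta * alpha has order r t and is a root of psi(x^r) but not of f;
  r t dvd q^m - 1 iff (r - 1) n dvd m, so the irreducible factor of F = psi(x^r) div f
  vanishing at gamma has degree (r - 1) n = degree F.  Hence F is irreducible of order r t.
*)

(* The algebraic closure theory imports HOL-Algebra, whose polynomial notions clash with
   the type-class ones used here. *)
hide_const (open) Polynomials.degree Polynomials.lead_coeff up_ring.coeff module.smult
  up_ring.monom Divisibility.irreducible Divisibility.prime

lemma map_poly_add_hom:
  assumes "h 0 = 0" "\<And>a b. h (a + b) = h a + h b"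
  shows "map_poly h (p + q) = map_poly h p + map_poly h q"
  by (intro poly_eqI) (simp add: coeff_map_poly assms)

lemma map_poly_mult_hom:
  fixes h :: "'b::comm_ring_1 \<Rightarrow> 'c::comm_ring_1"
  assumes hom: "h 0 = 0" "\<And>a b. h (a + b) = h a + h b" "\<And>a b. h (a * b) = h a * h b"
  shows "map_poly h (p * q) = map_poly h p * map_poly h q"
proof (induction p)
  case (pCons a p)
  have "map_poly h (pCons a p * q) = map_poly h (smult a q + pCons 0 (p * q))"
    by simp
  also have "\<dots> = map_poly h (pCons a p) * map_poly h q"
    by (simp add: map_poly_add_hom[OF hom(1,2)] map_poly_smult map_poly_pCons hom pCons.IH)
  finally show ?case .
qed simp

lemma map_poly_prod_hom:
  fixes h :: "'b::comm_ring_1 \<Rightarrow> 'c::comm_ring_1"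
  assumes hom: "h 0 = 0" "h 1 = 1" "\<And>a b. h (a + b) = h a + h b" "\<And>a b. h (a * b) = h a * h b"
  shows "map_poly h (\<Prod>i\<in>A. g i) = (\<Prod>i\<in>A. map_poly h (g i))"
  by (induction A rule: infinite_finite_induct) (simp_all add: map_poly_mult_hom[OF hom(1,3,4)] hom)

definition ac_eval :: "'a::field poly \<Rightarrow> 'a alg_closure \<Rightarrow> 'a alg_closure" where
  "ac_eval p x = poly (map_poly to_ac p) x"

lemma ac_eval_0 [simp]: "ac_eval 0 x = 0"
  by (simp add: ac_eval_def)

lemma ac_eval_pCons: "ac_eval (pCons a p) x = to_ac a + x * ac_eval p x"
  by (simp add: ac_eval_def map_poly_pCons)

lemma ac_eval_const [simp]: "ac_eval [:c:] x = to_ac c"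
  by (simp add: ac_eval_pCons)

lemma ac_eval_1 [simp]: "ac_eval 1 x = 1"
  by (simp add: ac_eval_def)

lemma ac_eval_X [simp]: "ac_eval [:0, 1:] x = x"
  by (simp add: ac_eval_pCons)

lemma ac_eval_add: "ac_eval (p + q) x = ac_eval p x + ac_eval q x"
  by (simp add: ac_eval_def map_poly_add_hom)

lemma ac_eval_diff: "ac_eval (p - q) x = ac_eval p x - ac_eval q x"
  using ac_eval_add[of "p - q" q x] by (simp add: algebra_simps)

lemma ac_eval_mult: "ac_eval (p * q) x = ac_eval p x * ac_eval q x"
  by (simp add: ac_eval_def map_poly_mult_hom)

lemma ac_eval_power: "ac_eval (p ^ k) x = ac_eval p x ^ k"
  by (induction k) (simp_all add: ac_eval_mult)

lemma ac_eval_pcompose: "ac_eval (pcompose p q) x = ac_eval p (ac_eval q x)"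
  by (induction p) (simp_all add: pcompose_pCons ac_eval_add ac_eval_mult ac_eval_pCons)

lemma ac_eval_mod: "ac_eval f x = 0 \<Longrightarrow> ac_eval (p mod f) x = ac_eval p x"
  by (simp add: ac_eval_diff ac_eval_mult flip: minus_div_mult_eq_mod)

lemma ac_eval_root_dvd: "g dvd h \<Longrightarrow> ac_eval g x = 0 \<Longrightarrow> ac_eval h x = 0"
  by (auto simp: ac_eval_mult elim!: dvdE)

lemma degree_map_to_ac [simp]: "degree (map_poly to_ac p) = degree p"
  by (rule degree_map_poly) simp

lemma map_to_ac_eq_0_iff [simp]: "map_poly to_ac p = 0 \<longleftrightarrow> p = 0"
  by (simp add: map_poly_eq_0_iff poly_eq_iff coeff_map_poly)

lemma ac_eval_root_exists:
  assumes "degree p > 0"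
  obtains x where "ac_eval p x = 0"
  using alg_closed_imp_poly_has_root[of "map_poly to_ac p"] assms by (auto simp: ac_eval_def)

lemma ac_eval_roots_card:
  assumes "p \<noteq> 0"
  shows "finite {x. ac_eval p x = 0}" "card {x. ac_eval p x = 0} \<le> degree p"
  using poly_roots_finite[of "map_poly to_ac p"] card_poly_roots_bound[of "map_poly to_ac p"] assms
  by (simp_all add: ac_eval_def)

definition is_min_poly :: "'a::field poly \<Rightarrow> 'a alg_closure \<Rightarrow> bool" where
  "is_min_poly m x \<longleftrightarrow>
     m \<noteq> 0 \<and> ac_eval m x = 0 \<and> (\<forall>h. h \<noteq> 0 \<longrightarrow> ac_eval h x = 0 \<longrightarrow> degree m \<le> degree h)"

lemma is_min_polyI:
  assumes "m \<noteq> 0" "ac_eval m x = 0" "\<And>h. h \<noteq> 0 \<Longrightarrow> ac_eval h x = 0 \<Longrightarrow> degree m \<le> degree h"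
  shows "is_min_poly m x"
  using assms by (simp add: is_min_poly_def)

lemma min_poly_exists:
  assumes "p \<noteq> 0" "ac_eval p x = 0"
  obtains m where "is_min_poly m x"
  using ex_has_least_nat[of "\<lambda>h. h \<noteq> 0 \<and> ac_eval h x = 0" p degree] assms
  by (auto simp: is_min_poly_def)

lemma min_poly_dvd:
  assumes min: "is_min_poly m x" and "ac_eval h x = 0"
  shows "m dvd h"
proof -
  have "m \<noteq> 0" "ac_eval m x = 0" using min by (simp_all add: is_min_poly_def)
  hence "ac_eval (h mod m) x = 0" using assms(2) by (simp add: ac_eval_mod)
  moreover have "degree (h mod m) < degree m" if "h mod m \<noteq> 0"
    using degree_mod_less'[OF \<open>m \<noteq> 0\<close> that] .
  ultimately have "h mod m = 0" using min by (meson is_min_poly_def not_le)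
  thus ?thesis by (simp add: mod_eq_0_iff_dvd)
qed

(* A minimal polynomial is irreducible: x is a root of one of the factors of a factorisation. *)
lemma min_poly_irreducible:
  assumes min: "is_min_poly g x"
  shows "irreducible g"
proof (rule Factorial_Ring.irreducibleI)
  have "g \<noteq> 0" and root: "ac_eval g x = 0"
    and least: "\<And>h. h \<noteq> 0 \<Longrightarrow> ac_eval h x = 0 \<Longrightarrow> degree g \<le> degree h"
    using min by (simp_all add: is_min_poly_def)
  show "g \<noteq> 0" by fact
  show "\<not> is_unit g"
  proof
    assume "is_unit g"
    then obtain c where "g = [:c:]" by (auto simp: is_unit_poly_iff)
    with root \<open>g \<noteq> 0\<close> show False by simp
  qed
  fix a b assume ab: "g = a * b"
  hence nonzero: "a \<noteq> 0" "b \<noteq> 0" using \<open>g \<noteq> 0\<close> by auto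
  from ab root have "ac_eval a x = 0 \<or> ac_eval b x = 0" by (simp add: ac_eval_mult)
  hence "degree g \<le> degree a \<or> degree g \<le> degree b" using least nonzero by blast
  hence "degree b = 0 \<or> degree a = 0" using ab nonzero by (auto simp: degree_mult_eq)
  thus "is_unit a \<or> is_unit b" using nonzero by (auto simp: is_unit_iff_degree)
qed

(* An irreducible polynomial is associated to the minimal polynomial of any of its roots, so it
   divides every polynomial sharing that root. *)
lemma irreducible_dvd_of_common_root:
  fixes g h :: "'a::field poly"
  assumes irr: "irreducible g" and roots: "ac_eval g x = 0" "ac_eval h x = 0"
  shows "g dvd h"
proof -
  have "g \<noteq> 0" using irr by auto
  then obtain m where m: "is_min_poly m x" using min_poly_exists roots(1) by blast
  have "\<not> is_unit m" using min_poly_irreducible[OF m] by (simp add: irreducible_not_unit)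
  moreover have "m dvd g" by (rule min_poly_dvd[OF m roots(1)])
  ultimately have "g dvd m" using irreducibleD'[OF irr] by blast
  also have "m dvd h" by (rule min_poly_dvd[OF m roots(2)])
  finally show ?thesis .
qed

lemma irreducible_factor_with_root:
  fixes p :: "'a::field poly"
  assumes "p \<noteq> 0" and root: "ac_eval p x = 0"
  obtains g where "irreducible g" "g dvd p" "ac_eval g x = 0"
proof -
  obtain m where m: "is_min_poly m x" using min_poly_exists assms by blast
  show ?thesis
    using that min_poly_irreducible[OF m] min_poly_dvd[OF m root] m by (simp add: is_min_poly_def)
qed

lemma irreducible_degree_pos:
  fixes g :: "'a::field poly"
  assumes "irreducible g"
  shows "degree g > 0"
proof -
  have "g \<noteq> 0" "\<not> is_unit g" using assms by (auto simp: irreducible_not_unit)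
  thus ?thesis by (simp add: is_unit_iff_degree)
qed

(* A root of an irreducible polynomial of degree other than 1 is nonzero: otherwise the
   polynomial would divide x. *)
lemma irreducible_root_nonzero:
  fixes g :: "'a::field poly"
  assumes irr: "irreducible g" and "degree g \<noteq> 1" and root: "ac_eval g x = 0"
  shows "x \<noteq> 0"
proof
  assume "x = 0"
  with irr root have "g dvd [:0, 1:]"
    by (intro irreducible_dvd_of_common_root) auto
  hence "degree g \<le> 1" using dvd_imp_degree_le[of g "[:0, 1:]"] by simp
  moreover have "degree g > 0" by (rule irreducible_degree_pos[OF irr])
  ultimately show False using \<open>degree g \<noteq> 1\<close> by simp
qed

lemma irreducible_if_factor_of_same_degree:
  fixes g p :: "'a::field poly"
  assumes "irreducible g" "g dvd p" "p \<noteq> 0" "degree p \<le> degree g"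
  shows "irreducible p"
proof -
  obtain k where p: "p = g * k" using assms(2) by (auto elim: dvdE)
  hence "k \<noteq> 0" "g \<noteq> 0" using assms(3) by auto
  hence "degree k = 0" using p assms(4) by (simp add: degree_mult_eq)
  hence "is_unit k" using \<open>k \<noteq> 0\<close> by (simp add: is_unit_iff_degree)
  thus ?thesis using p assms(1) irreducible_mult_unit_left[of k g] by (simp add: mult.commute)
qed

lemma card_UNIV_field_ge_2: "card (UNIV :: 'a::{finite,field} set) \<ge> 2"
proof -
  have "card {0::'a, 1} \<le> CARD('a)" by (intro card_mono) auto
  thus ?thesis by simp
qed

(* Fermat's little theorem for a finite field, from Lagrange in its group of units. *)
lemma power_card_eq_self:
  fixes x :: "'a::{finite,field}"
  shows "x ^ CARD('a) = x"
proof (cases "x = 0")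
  case True
  then show ?thesis using card_UNIV_field_ge_2[where 'a='a] by simp
next
  case False
  define R where "R = (ring_of_type_algebra :: 'a ring)"
  interpret field R unfolding R_def by (rule field_from_type_algebra)
  have units: "Units R = UNIV - {0}"
    using field_Units by (simp add: R_def ring_of_type_algebra_def)
  have pow: "y [^]\<^bsub>R\<^esub> n = y ^ n" for y :: 'a and n :: nat
    by (induction n) (simp_all add: R_def ring_of_type_algebra_def)
  have "x ^ card (UNIV - {0::'a}) = 1"
    using units_power_order_eq_one[of x] False units pow by (simp add: R_def ring_of_type_algebra_def)
  hence "x ^ (CARD('a) - 1) = 1" by (simp add: card_Diff_singleton)
  moreover have "x ^ CARD('a) = x * x ^ (CARD('a) - 1)"
    using card_UNIV_field_ge_2[where 'a='a] by (simp flip: power_Suc)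
  ultimately show ?thesis by simp
qed

lemma to_ac_power_card: "to_ac (c::'a::{finite,field}) ^ CARD('a) = to_ac c"
  by (simp flip: to_ac_power add: power_card_eq_self)

lemma power_card_power_eq_self:
  fixes x :: "'a::{finite,field}"
  shows "x ^ CARD('a) ^ m = x"
  by (induction m) (simp_all add: power_mult power_card_eq_self)

lemma to_ac_power_card_power: "to_ac (c::'a::{finite,field}) ^ CARD('a) ^ m = to_ac c"
  by (simp flip: to_ac_power add: power_card_power_eq_self)

(* The Frobenius identities below are proved by root counting: a polynomial with more roots
   than its degree is zero, and (a + x)^k - x^k - b has degree less than k. *)
lemma poly_eq_0_if_many_roots:
  fixes p :: "'b::idom poly"
  assumes roots: "\<And>x. x \<in> S \<Longrightarrow> poly p x = 0" and "degree p < card S"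
  shows "p = 0"
proof (rule ccontr)
  assume "p \<noteq> 0"
  have "card S \<le> card {x. poly p x = 0}"
    using roots by (intro card_mono poly_roots_finite \<open>p \<noteq> 0\<close>) auto
  also have "\<dots> \<le> degree p" by (rule card_poly_roots_bound) fact
  finally show False using \<open>degree p < card S\<close> by simp
qed

lemma degree_linear_power_diff_less:
  fixes a b :: "'b::field"
  assumes "k > 0"
  shows "degree ([:a, 1:] ^ k - [:0, 1:] ^ k - [:b:]) < k"
proof -
  define A where "A = [:a, 1:] ^ k - [:0, 1:] ^ k"
  have "degree A \<le> k"
    unfolding A_def by (intro degree_diff_le) (simp_all add: degree_linear_power)
  moreover have "coeff A k = 0"
    using lead_coeff_power[of "[:a, 1:]" k] lead_coeff_power[of "[:0, 1:]" k]
    by (simp add: A_def degree_linear_power)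
  ultimately have "degree A < k"
    using assms by (metis leading_coeff_0_iff le_neq_implies_less degree_0)
  thus ?thesis unfolding A_def[symmetric] using assms by (intro degree_diff_less) auto
qed

(* The Frobenius map y \<mapsto> y^q is additive on the closure: first for one summand in F_q, by
   counting roots in F_q, then in general, by counting roots in the copy of F_q. *)
lemma frobenius_add_to_ac:
  fixes c :: "'a::{finite,field}" and x :: "'a alg_closure"
  shows "(to_ac c + x) ^ CARD('a) = to_ac c + x ^ CARD('a)"
proof -
  define p :: "'a poly" where "p = [:c, 1:] ^ CARD('a) - [:0, 1:] ^ CARD('a) - [:c:]"
  have "p = 0"
  proof (rule poly_eq_0_if_many_roots)
    show "poly p a = 0" if "a \<in> UNIV" for a
      by (simp add: p_def poly_power power_card_eq_self)
    show "degree p < CARD('a)"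
      unfolding p_def using card_UNIV_field_ge_2[where 'a='a]
      by (intro degree_linear_power_diff_less) simp
  qed
  hence "ac_eval p x = 0" by simp
  thus ?thesis by (simp add: p_def ac_eval_diff ac_eval_power ac_eval_pCons diff_eq_eq)
qed

lemma frobenius_add:
  fixes x y :: "'a::{finite,field} alg_closure"
  shows "(x + y) ^ CARD('a) = x ^ CARD('a) + y ^ CARD('a)"
proof -
  define p :: "'a alg_closure poly"
    where "p = [:y, 1:] ^ CARD('a) - [:0, 1:] ^ CARD('a) - [:y ^ CARD('a):]"
  have "p = 0"
  proof (rule poly_eq_0_if_many_roots)
    show "poly p z = 0" if z: "z \<in> range to_ac" for z
    proof -
      obtain c where "z = to_ac c" using z by blast
      moreover have "(y + to_ac c) ^ CARD('a) = to_ac c + y ^ CARD('a)"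
        using frobenius_add_to_ac[of c y] by (simp add: add.commute)
      ultimately show ?thesis by (simp add: p_def poly_power to_ac_power_card)
    qed
    show "degree p < card (range (to_ac :: 'a \<Rightarrow> _))"
      unfolding p_def card_image[OF inj_to_ac] using card_UNIV_field_ge_2[where 'a='a]
      by (intro degree_linear_power_diff_less) simp
  qed
  hence "poly p x = 0" by simp
  thus ?thesis by (simp add: p_def poly_power algebra_simps)
qed

lemma frobenius_power_add:
  fixes x y :: "'a::{finite,field} alg_closure"
  shows "(x + y) ^ CARD('a) ^ m = x ^ CARD('a) ^ m + y ^ CARD('a) ^ m"
proof (induction m)
  case (Suc m)
  show ?case by (simp only: power_Suc2 power_mult Suc.IH frobenius_add)
qed simp

lemma frobenius_neg:
  fixes x :: "'a::{finite,field} alg_closure"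
  shows "(- x) ^ CARD('a) = - (x ^ CARD('a))"
proof -
  have "(- x) ^ CARD('a) + x ^ CARD('a) = 0"
    using frobenius_add[of "- x" x] card_UNIV_field_ge_2[where 'a='a] by (simp add: power_0_left)
  thus ?thesis by (simp add: eq_neg_iff_add_eq_0)
qed

lemma frobenius_power_inj:
  fixes x y :: "'a::{finite,field} alg_closure"
  assumes "x ^ CARD('a) ^ m = y ^ CARD('a) ^ m"
  shows "x = y"
proof -
  have "(x - y) ^ CARD('a) ^ m + y ^ CARD('a) ^ m = x ^ CARD('a) ^ m"
    using frobenius_power_add[of "x - y" y m] by simp
  hence "(x - y) ^ CARD('a) ^ m = 0" using assms by simp
  thus ?thesis by simp
qed

(* The fixed points of Frobenius are exactly the elements of F_q: they are the q roots of x^q - x. *)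
lemma frobenius_fixed_imp_in_range:
  fixes y :: "'a::{finite,field} alg_closure"
  assumes "y ^ CARD('a) = y"
  shows "y \<in> range to_ac"
proof -
  define p :: "'a alg_closure poly" where "p = [:0, 1:] ^ CARD('a) + [:0, -1:]"
  have "degree p = CARD('a)"
    using card_UNIV_field_ge_2[where 'a='a] by (simp add: p_def degree_add_eq_left degree_linear_power)
  hence "p \<noteq> 0" using card_UNIV_field_ge_2[where 'a='a] by auto
  define R where "R = {z. poly p z = 0}"
  have finite: "finite R" unfolding R_def by (rule poly_roots_finite) fact
  have "card R \<le> CARD('a)"
    unfolding R_def using card_poly_roots_bound[OF \<open>p \<noteq> 0\<close>] \<open>degree p = CARD('a)\<close> by simp
  moreover have sub: "range to_ac \<subseteq> R" by (auto simp: R_def p_def poly_power to_ac_power_card)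
  moreover have "card (range (to_ac :: 'a \<Rightarrow> _)) = CARD('a)" by (simp add: card_image inj_to_ac)
  ultimately have "range to_ac = R" using card_subset_eq[OF finite sub] card_mono[OF finite sub] by simp
  moreover have "y \<in> R" using assms by (simp add: R_def p_def poly_power)
  ultimately show ?thesis by simp
qed

lemma ac_eval_frobenius:
  fixes p :: "'a::{finite,field} poly"
  shows "ac_eval p x ^ CARD('a) ^ m = ac_eval p (x ^ CARD('a) ^ m)"
  using card_UNIV_field_ge_2[where 'a='a]
  by (induction p) (simp_all add: ac_eval_pCons frobenius_power_add power_mult_distrib
      to_ac_power_card_power power_0_left flip: power_mult)

lemma frobenius_orbit_cancel:
  fixes x :: "'a::{finite,field} alg_closure"
  assumes "x ^ CARD('a) ^ a = x ^ CARD('a) ^ b" "a < b"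
  shows "x ^ CARD('a) ^ (b - a) = x"
proof (rule frobenius_power_inj)
  show "(x ^ CARD('a) ^ (b - a)) ^ CARD('a) ^ a = x ^ CARD('a) ^ a"
    using assms by (simp flip: power_mult power_add)
qed

(* The orbit of a root of g stays among the roots of g, so it has a period at most degree g. *)
lemma frobenius_period_le_degree:
  fixes g :: "'a::{finite,field} poly"
  assumes "g \<noteq> 0" and root: "ac_eval g x = 0"
  obtains j where "0 < j" "j \<le> degree g" "x ^ CARD('a) ^ j = x"
proof -
  define R where "R = {y. ac_eval g y = 0}"
  have R: "finite R" "card R \<le> degree g"
    using ac_eval_roots_card[OF \<open>g \<noteq> 0\<close>] by (simp_all add: R_def)
  have "(\<lambda>i. x ^ CARD('a) ^ i) ` {..degree g} \<subseteq> R"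
    using root card_UNIV_field_ge_2[where 'a='a]
    by (auto simp: R_def power_0_left simp flip: ac_eval_frobenius)
  hence "\<not> inj_on (\<lambda>i. x ^ CARD('a) ^ i) {..degree g}"
    using card_inj_on_le[OF _ _ \<open>finite R\<close>, of _ "{..degree g}"] R(2) by fastforce
  then obtain a b where ab: "a \<le> degree g" "b \<le> degree g" "a \<noteq> b"
    "x ^ CARD('a) ^ a = x ^ CARD('a) ^ b"
    by (auto simp: inj_on_def)
  show ?thesis
  proof (cases "a < b")
    case True
    thus ?thesis using ab frobenius_orbit_cancel[of x a b] by (intro that[of "b - a"]) auto
  next
    case False
    thus ?thesis using ab frobenius_orbit_cancel[of x b a] by (intro that[of "a - b"]) auto
  qed
qed

(* If x has Frobenius period j, then the product of (X - x^(q^i)) for i < j is Frobenius-invariant,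
   hence has coefficients in F_q. *)
lemma frobenius_orbit_poly:
  fixes x :: "'a::{finite,field} alg_closure"
  assumes period: "x ^ CARD('a) ^ j = x"
  obtains h :: "'a poly" where "map_poly to_ac h = (\<Prod>i<j. [:- (x ^ CARD('a) ^ i), 1:])"
proof -
  define F where "F i = [:- (x ^ CARD('a) ^ i), 1:]" for i
  define frob :: "'a alg_closure \<Rightarrow> 'a alg_closure" where "frob y = y ^ CARD('a)" for y
  have step: "map_poly frob (F i) = F (Suc i)" for i
    using card_UNIV_field_ge_2[where 'a='a]
    by (simp add: F_def frob_def map_poly_pCons frobenius_neg flip: power_mult power_Suc2)
  have "map_poly frob (\<Prod>i<j. F i) = (\<Prod>i<j. map_poly frob (F i))"
    using card_UNIV_field_ge_2[where 'a='a]
    by (intro map_poly_prod_hom) (simp_all add: frob_def frobenius_add power_mult_distrib)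
  also have "\<dots> = (\<Prod>i<j. F (Suc i))" by (simp only: step)
  also have "(\<Prod>i<j. F (Suc i)) = (\<Prod>i<j. F i)"
  proof -
    have "F 0 * (\<Prod>i<j. F (Suc i)) = (\<Prod>i<j. F i) * F j"
      by (simp flip: prod.lessThan_Suc_shift)
    also have "F j = F 0" using period by (simp add: F_def)
    finally have "F 0 * (\<Prod>i<j. F (Suc i)) = F 0 * (\<Prod>i<j. F i)" by (metis mult.commute)
    moreover have "F 0 \<noteq> 0" by (simp add: F_def)
    ultimately show ?thesis by (metis mult_left_cancel)
  qed
  finally have fixed: "map_poly frob (\<Prod>i<j. F i) = (\<Prod>i<j. F i)" .
  have "coeff (\<Prod>i<j. F i) k \<in> range to_ac" for k
  proof (rule frobenius_fixed_imp_in_range)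
    show "coeff (\<Prod>i<j. F i) k ^ CARD('a) = coeff (\<Prod>i<j. F i) k"
      using arg_cong[OF fixed, of "\<lambda>p. coeff p k"] card_UNIV_field_ge_2[where 'a='a]
      by (simp add: coeff_map_poly frob_def power_0_left)
  qed
  hence "map_poly to_ac (map_poly of_ac (\<Prod>i<j. F i)) = (\<Prod>i<j. F i)"
    by (intro poly_eqI) (simp add: coeff_map_poly to_ac_of_ac)
  thus ?thesis using that unfolding F_def by blast
qed

(* That product vanishes at x, so an irreducible g with root x divides it: degree g \<le> j. *)
lemma irreducible_degree_le_period:
  fixes g :: "'a::{finite,field} poly"
  assumes irr: "irreducible g" and root: "ac_eval g x = 0"
    and "0 < j" and period: "x ^ CARD('a) ^ j = x"
  shows "degree g \<le> j"
proof -
  obtain h where h: "map_poly to_ac h = (\<Prod>i<j. [:- (x ^ CARD('a) ^ i), 1:])"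
    using frobenius_orbit_poly[OF period] by blast
  have "degree h = j"
    using arg_cong[OF h, of degree] by (simp add: degree_prod_eq_sum_degree)
  hence "h \<noteq> 0" using \<open>0 < j\<close> by auto
  have "ac_eval h x = (\<Prod>i<j. x - x ^ CARD('a) ^ i)"
    by (simp add: ac_eval_def h poly_prod)
  also have "\<dots> = 0" using \<open>0 < j\<close> by (intro prod_zero) (auto intro: bexI[of _ 0])
  finally have "g dvd h" by (intro irreducible_dvd_of_common_root[OF irr root])
  thus ?thesis using dvd_imp_degree_le[OF _ \<open>h \<noteq> 0\<close>] \<open>degree h = j\<close> by simp
qed

lemma irreducible_root_frobenius_fixed_iff:
  fixes g :: "'a::{finite,field} poly"
  assumes irr: "irreducible g" and root: "ac_eval g x = 0"
  shows "x ^ CARD('a) ^ m = x \<longleftrightarrow> degree g dvd m"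
proof -
  have "g \<noteq> 0" using irr by auto
  obtain j where j: "0 < j" "j \<le> degree g" "x ^ CARD('a) ^ j = x"
    using frobenius_period_le_degree[OF \<open>g \<noteq> 0\<close> root] by blast
  with irreducible_degree_le_period[OF irr root] have "j = degree g" by (simp add: le_antisym)
  with j have fixed: "x ^ CARD('a) ^ degree g = x" by simp
  have multiple: "x ^ CARD('a) ^ (degree g * k + l) = x ^ CARD('a) ^ l" for k l
  proof (induction k)
    case (Suc k)
    have "x ^ CARD('a) ^ (degree g * Suc k + l)
          = (x ^ CARD('a) ^ degree g) ^ CARD('a) ^ (degree g * k + l)"
      by (simp flip: power_mult power_add add: algebra_simps)
    thus ?case using fixed Suc.IH by simp
  qed simp
  show ?thesis
  proof
    assume "degree g dvd m"
    thus "x ^ CARD('a) ^ m = x" using multiple[of _ 0] by (auto elim: dvdE)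
  next
    assume "x ^ CARD('a) ^ m = x"
    hence "x ^ CARD('a) ^ (m mod degree g) = x"
      using multiple[of "m div degree g" "m mod degree g"] by simp
    moreover have "m mod degree g < degree g" using j by simp
    ultimately have "m mod degree g = 0"
      using irreducible_degree_le_period[OF irr root, of "m mod degree g"] by (meson not_le neq0_conv)
    thus "degree g dvd m" by (simp add: mod_eq_0_iff_dvd)
  qed
qed

definition has_mult_order :: "'b::monoid_mult \<Rightarrow> nat \<Rightarrow> bool" where
  "has_mult_order x d \<longleftrightarrow> (\<forall>e. x ^ e = 1 \<longleftrightarrow> d dvd e)"

lemma has_mult_order_unique: "has_mult_order x d \<Longrightarrow> has_mult_order x d' \<Longrightarrow> d = d'"
  unfolding has_mult_order_def by (metis dvd_antisym dvd_refl)

lemma has_mult_order_exists: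
  fixes x :: "'b::monoid_mult"
  assumes "x ^ N = 1" "N > 0"
  obtains d where "d > 0" "has_mult_order x d"
proof -
  define d where "d = (LEAST e. 0 < e \<and> x ^ e = 1)"
  have d: "0 < d" "x ^ d = 1"
    using LeastI[of "\<lambda>e. 0 < e \<and> x ^ e = 1" N] assms by (simp_all add: d_def)
  have "x ^ e = 1 \<longleftrightarrow> d dvd e" for e
  proof
    assume "x ^ e = 1"
    moreover have "x ^ e = (x ^ d) ^ (e div d) * x ^ (e mod d)"
      by (simp flip: power_mult power_add)
    ultimately have "x ^ (e mod d) = 1" using d by simp
    moreover have "e mod d < d" using d by simp
    ultimately have "e mod d = 0"
      using not_less_Least[of "e mod d" "\<lambda>e. 0 < e \<and> x ^ e = 1"] by (auto simp: d_def)
    thus "d dvd e" by (simp add: mod_eq_0_iff_dvd)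
  qed (use d in \<open>auto simp: power_mult elim!: dvdE\<close>)
  thus ?thesis using that d by (simp add: has_mult_order_def)
qed

lemma coprime_mult_dvd_iff:
  fixes a b c :: nat
  assumes "coprime a b"
  shows "a * b dvd c \<longleftrightarrow> a dvd c \<and> b dvd c"
  using assms by (auto intro: divides_mult dvd_mult_left dvd_mult_right)

lemma has_mult_order_power_coprime:
  fixes x :: "'b::monoid_mult"
  assumes "has_mult_order x t" "coprime r t"
  shows "has_mult_order (x ^ r) t"
  using assms by (simp add: has_mult_order_def coprime_dvd_mult_right_iff coprime_commute flip: power_mult)

lemma has_mult_order_mult_coprime:
  fixes x y :: "'b::comm_monoid_mult"
  assumes x: "has_mult_order x a" and y: "has_mult_order y b" and "coprime a b"
  shows "has_mult_order (x * y) (a * b)"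
  unfolding has_mult_order_def
proof (intro allI iffI)
  fix e assume xy: "(x * y) ^ e = 1"
  have "y ^ (e * b) = 1" using y by (simp add: has_mult_order_def)
  hence "x ^ (e * b) = (x * y) ^ (e * b)" by (simp add: power_mult_distrib)
  hence "x ^ (e * b) = 1" using xy by (simp add: power_mult)
  hence "a dvd e * b" using x by (simp add: has_mult_order_def)
  hence "a dvd e" using \<open>coprime a b\<close> by (simp add: coprime_dvd_mult_left_iff)
  moreover have "x ^ (e * a) = 1" using x by (simp add: has_mult_order_def)
  hence "y ^ (e * a) = (x * y) ^ (e * a)" by (simp add: power_mult_distrib)
  hence "y ^ (e * a) = 1" using xy by (simp add: power_mult)
  hence "b dvd e * a" using y by (simp add: has_mult_order_def)
  hence "b dvd e" using \<open>coprime a b\<close> by (simp add: coprime_dvd_mult_left_iff coprime_commute)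
  ultimately show "a * b dvd e" using \<open>coprime a b\<close> by (simp add: coprime_mult_dvd_iff)
next
  fix e assume "a * b dvd e"
  hence "a dvd e" "b dvd e" using \<open>coprime a b\<close> by (simp_all add: coprime_mult_dvd_iff)
  hence "x ^ e = 1" "y ^ e = 1" using x y by (simp_all add: has_mult_order_def)
  thus "(x * y) ^ e = 1" by (simp add: power_mult_distrib)
qed

lemma fixed_iff_power_eq_1:
  fixes x :: "'b::field"
  assumes "x \<noteq> 0" "N > 0"
  shows "x ^ N = x \<longleftrightarrow> x ^ (N - 1) = 1"
proof -
  have "x ^ N = x * x ^ (N - 1)" using assms(2) by (simp flip: power_Suc)
  thus ?thesis using assms(1) by simp
qed

lemma irreducible_root_order_dvd_iff:
  fixes g :: "'a::{finite,field} poly"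
  assumes irr: "irreducible g" and root: "ac_eval g x = 0" and "x \<noteq> 0"
    and order: "has_mult_order x d"
  shows "d dvd CARD('a) ^ m - 1 \<longleftrightarrow> degree g dvd m"
proof -
  have "CARD('a) ^ m > 0" using card_UNIV_field_ge_2[where 'a='a] by simp
  hence "x ^ CARD('a) ^ m = x \<longleftrightarrow> x ^ (CARD('a) ^ m - 1) = 1"
    by (rule fixed_iff_power_eq_1[OF \<open>x \<noteq> 0\<close>])
  thus ?thesis using order irreducible_root_frobenius_fixed_iff[OF irr root]
    by (simp add: has_mult_order_def)
qed

lemma poly_order_of_root:
  fixes P :: "'a::{finite,field} poly"
  assumes irr: "irreducible P" and root: "ac_eval P x = 0" and "x \<noteq> 0"
  shows "poly_order P > 0" "has_mult_order x (poly_order P)"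
proof -
  have dvd_iff: "P dvd [:0, 1:] ^ e - 1 \<longleftrightarrow> x ^ e = 1" for e
    using irreducible_dvd_of_common_root[OF irr root, of "[:0, 1:] ^ e - 1"]
      ac_eval_root_dvd[of P "[:0, 1:] ^ e - 1", OF _ root]
    by (auto simp: ac_eval_diff ac_eval_power)
  have "degree P > 0" by (rule irreducible_degree_pos[OF irr])
  hence "CARD('a) ^ degree P > 1"
    using card_UNIV_field_ge_2[where 'a='a] by (intro one_less_power) simp_all
  moreover have "x ^ CARD('a) ^ degree P = x"
    using irreducible_root_frobenius_fixed_iff[OF irr root] by simp
  ultimately have "x ^ (CARD('a) ^ degree P - 1) = 1"
    using fixed_iff_power_eq_1[OF \<open>x \<noteq> 0\<close>] by simp
  then obtain d where d: "d > 0" "has_mult_order x d"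
    using has_mult_order_exists \<open>CARD('a) ^ degree P > 1\<close> by (metis zero_less_diff)
  have "poly_order P = d"
    unfolding poly_order_def dvd_iff
  proof (rule Least_equality)
    show "0 < d \<and> x ^ d = 1" using d by (simp add: has_mult_order_def)
    show "d \<le> e" if "0 < e \<and> x ^ e = 1" for e
      using that d by (auto simp: has_mult_order_def intro: dvd_imp_le)
  qed
  thus "poly_order P > 0" "has_mult_order x (poly_order P)" using d by simp_all
qed

lemma irreducible_root_degree_eq:
  fixes g :: "'a::{finite,field} poly"
  assumes "irreducible g" "ac_eval g x = 0" "x \<noteq> 0" "has_mult_order x d"
    and "\<And>m. d dvd CARD('a) ^ m - 1 \<longleftrightarrow> k dvd m"
  shows "degree g = k"
  using irreducible_root_order_dvd_iff[OF assms(1-4)] assms(5) by (metis dvd_antisym dvd_refl)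

(* Since r is a prime different from the characteristic, X^r - 1 has a root \<noteq> 1 in the closure:
   a primitive r-th root of unity. *)
lemma of_nat_nonzero_alg_closure:
  assumes "prime r" "\<not> r dvd CARD('a)"
  shows "of_nat r \<noteq> (0 :: 'a::{finite,field} alg_closure)"
proof
  assume "of_nat r = (0 :: 'a alg_closure)"
  hence "(of_nat r :: 'a) = 0" by (metis to_ac_of_nat to_ac_eq_0_iff)
  hence "CHAR('a) dvd r" by (simp add: of_nat_eq_0_iff_char_dvd)
  moreover have "CHAR('a) \<noteq> 1" by simp
  ultimately have "CHAR('a) = r" using assms(1) by (auto simp: prime_nat_iff)
  thus False using CHAR_dvd_CARD[where 'a='a] assms(2) by simp
qed

lemma primitive_root_of_unity_exists:
  assumes "prime r" "\<not> r dvd CARD('a)"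
  obtains \<zeta> :: "'a::{finite,field} alg_closure" where "has_mult_order \<zeta> r"
proof -
  define S :: "'a alg_closure poly" where "S = (\<Sum>i<r. monom 1 i)"
  have poly_S: "poly S y = (\<Sum>i<r. y ^ i)" for y by (simp add: S_def poly_sum poly_monom)
  have "r \<ge> 2" using prime_ge_2_nat[OF assms(1)] .
  hence "coeff S (r - 1) = 1" by (simp add: S_def coeff_sum coeff_monom)
  hence "degree S \<ge> r - 1" by (intro le_degree) simp
  hence "degree S > 0" using \<open>r \<ge> 2\<close> by simp
  then obtain z where z: "poly S z = 0" using alg_closed_imp_poly_has_root by blast
  have "z ^ r - 1 = (z - 1) * poly S z" by (simp add: poly_S power_diff_1_eq)
  hence "z ^ r = 1" using z by simp
  then obtain d where d: "d > 0" "has_mult_order z d"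
    using has_mult_order_exists \<open>r \<ge> 2\<close> by (metis not_numeral_le_zero neq0_conv)
  have "z \<noteq> 1"
  proof
    assume "z = 1"
    hence "poly S 1 = 0" using z by simp
    thus False using poly_S[of 1] of_nat_nonzero_alg_closure[OF assms] by simp
  qed
  have "d dvd r" using d(2) \<open>z ^ r = 1\<close> by (simp add: has_mult_order_def)
  moreover have "d \<noteq> 1"
    using d(2)[unfolded has_mult_order_def, rule_format, of 1] \<open>z \<noteq> 1\<close> by auto
  ultimately have "d = r" using assms(1) by (auto simp: prime_nat_iff)
  thus ?thesis using that d(2) by blast
qed

lemma dvd_power_minus_1_iff_ord_dvd:
  fixes q r m :: nat
  assumes "q > 0"
  shows "r dvd q ^ m - 1 \<longleftrightarrow> ord r q dvd m"
proof -
  have "r dvd q ^ m - 1 \<longleftrightarrow> [q ^ m = 1] (mod r)"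
    using cong_altdef_nat[of 1 "q ^ m" r] assms by simp
  also have "\<dots> \<longleftrightarrow> ord r q dvd m" by (rule ord_divides)
  finally show ?thesis .
qed

locale lifting_setup =
  fixes f \<psi> :: "'a::{finite,field} poly" and r n t :: nat and \<alpha> :: "'a alg_closure"
  assumes r_prime: "prime r" and r_odd: "odd r"
    and r_ndvd: "\<not> r dvd CARD('a)"
    and ord_q: "ord r CARD('a) = r - 1"
    and n_gt: "n > 1" and n_coprime: "gcd n (r - 1) = 1"
    and f_irr: "irreducible f" and f_deg: "degree f = n" and f_order: "poly_order f = t"
    and psi_nonzero: "\<psi> \<noteq> 0"
    and psi_ann: "f dvd pcompose \<psi> ([:0, 1:] ^ r mod f)"
    and psi_min: "\<And>g. g \<noteq> 0 \<Longrightarrow> f dvd pcompose g ([:0, 1:] ^ r mod f) \<Longrightarrow> degree \<psi> \<le> degree g"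
    and alpha_root: "ac_eval f \<alpha> = 0"
begin

abbreviation lift :: "'a poly" where
  "lift \<equiv> pcompose \<psi> ([:0, 1:] ^ r)"

lemma r_ge_3: "r \<ge> 3"
  using prime_ge_2_nat[OF r_prime] r_odd by (cases "r = 2") auto

lemma alpha_nonzero: "\<alpha> \<noteq> 0"
  using irreducible_root_nonzero[OF f_irr _ alpha_root] f_deg n_gt by simp

lemma alpha_order: "t > 0" "has_mult_order \<alpha> t"
  using poly_order_of_root[OF f_irr alpha_root alpha_nonzero] f_order by simp_all

lemma t_dvd_iff: "t dvd CARD('a) ^ m - 1 \<longleftrightarrow> n dvd m"
  using irreducible_root_order_dvd_iff[OF f_irr alpha_root alpha_nonzero alpha_order(2)] f_deg
  by simp

lemma r_dvd_iff: "r dvd CARD('a) ^ m - 1 \<longleftrightarrow> r - 1 dvd m"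
  using dvd_power_minus_1_iff_ord_dvd[of "CARD('a)" r m] card_UNIV_field_ge_2[where 'a='a] ord_q
  by simp

(* r does not divide t, since otherwise r - 1 would divide n. *)
lemma coprime_r_t: "coprime r t"
proof (rule prime_imp_coprime[OF r_prime], rule notI)
  assume "r dvd t"
  moreover have "t dvd CARD('a) ^ n - 1" using t_dvd_iff by simp
  ultimately have "r dvd CARD('a) ^ n - 1" by (rule dvd_trans)
  hence "r - 1 dvd gcd n (r - 1)" using r_dvd_iff by simp
  thus False using n_coprime r_ge_3 by simp
qed

lemma rt_dvd_iff: "r * t dvd CARD('a) ^ m - 1 \<longleftrightarrow> (r - 1) * n dvd m"
proof -
  have "coprime n (r - 1)" using n_coprime by (simp only: coprime_iff_gcd_eq_1)
  hence coprime: "coprime (r - 1) n" by (simp only: coprime_commute)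
  have "r * t dvd CARD('a) ^ m - 1 \<longleftrightarrow> r dvd CARD('a) ^ m - 1 \<and> t dvd CARD('a) ^ m - 1"
    by (rule coprime_mult_dvd_iff[OF coprime_r_t])
  also have "\<dots> \<longleftrightarrow> r - 1 dvd m \<and> n dvd m" by (simp only: r_dvd_iff t_dvd_iff)
  also have "\<dots> \<longleftrightarrow> (r - 1) * n dvd m" by (rule coprime_mult_dvd_iff[OF coprime, symmetric])
  finally show ?thesis .
qed

lemma beta_order: "has_mult_order (\<alpha> ^ r) t"
  by (rule has_mult_order_power_coprime[OF alpha_order(2) coprime_r_t])

lemma f_dvd_compose_iff: "f dvd pcompose g ([:0, 1:] ^ r mod f) \<longleftrightarrow> ac_eval g (\<alpha> ^ r) = 0"
proof -
  have "ac_eval (pcompose g ([:0, 1:] ^ r mod f)) \<alpha> = ac_eval g (\<alpha> ^ r)"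
    by (simp add: ac_eval_pcompose ac_eval_mod[OF alpha_root] ac_eval_power)
  thus ?thesis
    using irreducible_dvd_of_common_root[OF f_irr alpha_root] ac_eval_root_dvd[OF _ alpha_root] by metis
qed

lemma psi_root: "ac_eval \<psi> (\<alpha> ^ r) = 0"
  using psi_ann f_dvd_compose_iff by simp

lemma psi_min_poly: "is_min_poly \<psi> (\<alpha> ^ r)"
  by (rule is_min_polyI[OF psi_nonzero psi_root]) (simp add: psi_min f_dvd_compose_iff)

lemma psi_irreducible: "irreducible \<psi>"
  by (rule min_poly_irreducible[OF psi_min_poly])

lemma psi_degree: "degree \<psi> = n"
  by (rule irreducible_root_degree_eq[OF psi_irreducible psi_root _ beta_order t_dvd_iff])
    (simp add: alpha_nonzero)

lemma ac_eval_lift: "ac_eval lift y = ac_eval \<psi> (y ^ r)"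
  by (simp add: ac_eval_pcompose ac_eval_power)

lemma f_dvd_lift: "f dvd lift"
  by (rule irreducible_dvd_of_common_root[OF f_irr alpha_root]) (simp add: ac_eval_lift psi_root)

(* gamma = zeta * alpha, with zeta a primitive r-th root of unity, is a root of psi(x^r) of order r t. *)
lemma lifted_root_exists:
  obtains \<gamma> where "\<gamma> \<noteq> 0" "has_mult_order \<gamma> (r * t)" "ac_eval lift \<gamma> = 0"
proof -
  obtain \<zeta> :: "'a alg_closure" where \<zeta>: "has_mult_order \<zeta> r"
    by (rule primitive_root_of_unity_exists[OF r_prime r_ndvd])
  hence "\<zeta> ^ r = 1" by (simp add: has_mult_order_def)
  hence "\<zeta> \<noteq> 0" using r_ge_3 by (metis power_0_left not_numeral_le_zero zero_neq_one)
  show ?thesis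
  proof (rule that)
    show "\<zeta> * \<alpha> \<noteq> 0" using \<open>\<zeta> \<noteq> 0\<close> alpha_nonzero by simp
    show "has_mult_order (\<zeta> * \<alpha>) (r * t)"
      by (rule has_mult_order_mult_coprime[OF \<zeta> alpha_order(2) coprime_r_t])
    show "ac_eval lift (\<zeta> * \<alpha>) = 0"
      using \<open>\<zeta> ^ r = 1\<close> psi_root by (simp add: ac_eval_lift power_mult_distrib)
  qed
qed

lemma quotient_degree: "degree (lift div f) = (r - 1) * n"
proof -
  have lift: "lift = f * (lift div f)" using f_dvd_lift by simp
  have "degree lift = n * r" by (simp add: degree_pcompose psi_degree degree_linear_power)
  hence "lift \<noteq> 0" using n_gt r_ge_3 by auto
  hence "degree lift = n + degree (lift div f)"
    using lift f_deg by (metis degree_mult_eq mult_eq_0_iff)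
  thus ?thesis using \<open>degree lift = n * r\<close> r_ge_3 by (simp add: algebra_simps diff_mult_distrib)
qed

(* gamma is not a root of f, since otherwise f would have degree (r - 1) n \<noteq> n; so it is a
   root of F. *)
lemma quotient_root:
  assumes "\<gamma> \<noteq> 0" "has_mult_order \<gamma> (r * t)" "ac_eval lift \<gamma> = 0"
  shows "ac_eval (lift div f) \<gamma> = 0"
proof -
  have "ac_eval f \<gamma> \<noteq> 0"
  proof
    assume "ac_eval f \<gamma> = 0"
    hence "degree f = (r - 1) * n"
      by (rule irreducible_root_degree_eq[OF f_irr _ assms(1,2) rt_dvd_iff])
    thus False using f_deg r_ge_3 n_gt by simp
  qed
  moreover have "ac_eval lift \<gamma> = ac_eval f \<gamma> * ac_eval (lift div f) \<gamma>"
    using f_dvd_lift by (simp flip: ac_eval_mult)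
  ultimately show ?thesis using assms(3) by simp
qed

(* F has an irreducible factor with root gamma, of degree (r - 1) n = degree F; so F is
   irreducible, and its order is the order r t of gamma. *)
lemma quotient_irreducible_order:
  "irreducible (lift div f)" "poly_order (lift div f) = r * t"
proof -
  obtain \<gamma> where \<gamma>: "\<gamma> \<noteq> 0" "has_mult_order \<gamma> (r * t)" "ac_eval lift \<gamma> = 0"
    using lifted_root_exists by blast
  have root: "ac_eval (lift div f) \<gamma> = 0" by (rule quotient_root[OF \<gamma>])
  have "lift div f \<noteq> 0" using quotient_degree n_gt r_ge_3 by auto
  then obtain G where G: "irreducible G" "G dvd lift div f" "ac_eval G \<gamma> = 0"
    using irreducible_factor_with_root root by blast
  have "degree G = (r - 1) * n"
    by (rule irreducible_root_degree_eq[OF G(1,3) \<gamma>(1,2) rt_dvd_iff])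
  thus irr: "irreducible (lift div f)"
    using irreducible_if_factor_of_same_degree[OF G(1,2) \<open>lift div f \<noteq> 0\<close>] quotient_degree by simp
  show "poly_order (lift div f) = r * t"
    using has_mult_order_unique[OF poly_order_of_root(2)[OF irr root \<gamma>(1)] \<gamma>(2)] .
qed

end

(* The theorem: choose a root alpha of f and apply the results of lifting_setup. *)
theorem mainTheorem5:
  fixes f \<psi> :: "'a::{finite,field} poly" and r n t :: nat
  assumes r_prime: "prime r" and r_odd: "odd r"
    and r_ndvd: "\<not> r dvd card (UNIV :: 'a set)"
    and ord_q: "ord r (card (UNIV :: 'a set)) = r - 1"
    and n_gt: "n > 1" and n_coprime: "gcd n (r - 1) = 1"
    and f_monic: "lead_coeff f = 1" and f_irr: "irreducible f" and f_deg: "degree f = n"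
    and f_order: "poly_order f = t"
    and psi_monic: "lead_coeff \<psi> = 1"
    and psi_deg_le: "degree \<psi> \<le> n"
    and psi_ann: "f dvd pcompose \<psi> ([:0, 1:] ^ r mod f)"
    and psi_min: "\<And>g. g \<noteq> 0 \<Longrightarrow> f dvd pcompose g ([:0, 1:] ^ r mod f) \<Longrightarrow> degree \<psi> \<le> degree g"
  shows "irreducible \<psi> \<and> degree \<psi> = n \<and>
         f dvd pcompose \<psi> ([:0, 1:] ^ r) \<and>
         irreducible (pcompose \<psi> ([:0, 1:] ^ r) div f) \<and>
         degree (pcompose \<psi> ([:0, 1:] ^ r) div f) = (r - 1) * n \<and>
         poly_order (pcompose \<psi> ([:0, 1:] ^ r) div f) = r * t"
proof -
  have "degree f > 0" using f_deg n_gt by simp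
  then obtain \<alpha> where \<alpha>: "ac_eval f \<alpha> = 0" by (rule ac_eval_root_exists)
  have "\<psi> \<noteq> 0" using psi_monic by auto
  interpret lifting_setup f \<psi> r n t \<alpha>
    by unfold_locales (use assms \<alpha> \<open>\<psi> \<noteq> 0\<close> in auto)
  show ?thesis
    using psi_irreducible psi_degree f_dvd_lift quotient_degree quotient_irreducible_order by simp
qed

end
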